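(* There exists $C>0$ such that for all $\alpha\in[\frac23,1]$, $\beta\in[\frac2\alpha-2,1]$, $\kappa\in[\frac{2-\alpha}{\alpha(1+\beta)},1]$, and $\gamma,\bar\gamma\in C^{1,\beta}([0,1],\mathbf T^2)$ (of diameter at most $\frac14$), $$|\gamma;\bar\gamma|_\alpha\le C\Big[(|\dot\gamma|_\infty+|\dot{\bar\gamma}|_\infty)(|\dot\gamma|_{\mathrm{Hol}\,\beta}+|\dot{\bar\gamma}|_{\mathrm{Hol}\,\beta})^\kappa|\gamma-\bar\gamma|_\infty^{1-\kappa}\Big]^{\alpha/2}.$$
   Context: $\mathbf T^2=[-\frac12,\frac12)^2$ with geodesic distance. $C^{1,\beta}([0,1],\mathbf T^2)$ is the space of differentiable $\gamma$ with $\dot\gamma$ $\beta$-Hölder; $|\cdot|_\infty$ is the supremum norm and $|f|_{\mathrm{Hol}\,\beta}=\sup_{s\ne t}|f(s)-f(t)|/|s-t|^\beta$. For a path $\gamma$, $P_{sut}$ is the triangle with vertices $\gamma(s),\gamma(u),\gamma(t)$; for triangles $P_1,P_2$, $|P_1;P_2|$ is the area of the symmetric difference of the interiors if they have the same orientation and the sum of their areas otherwise. $|\gamma;\bar\gamma|_{[s,t]}=\sup_{u\in[s,t]}|P_{sut};\bar P_{sut}|^{1/2}$ and $|\gamma;\bar\gamma|_\alpha=\sup_D\sum_{[a,b]\in D}|\gamma;\bar\gamma|^\alpha_{[a,b]}$, the supremum over partitions $D$ of $[0,1]$ into consecutive closed subintervals. *)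

theory Defs
  imports "HOL-Analysis.Analysis"
begin

text \<open>The torus T^2 = [-1/2,1/2)^2. Paths into the torus are represented by
  their (continuous) lifts to the plane, real^2; all torus quantities are
  computed through the covering projection.\<close>

definition tproj :: "real^2 \<Rightarrow> real^2" where
  "tproj x = (\<chi> i. x$i - of_int (round (x$i)))"

definition tdist :: "real^2 \<Rightarrow> real^2 \<Rightarrow> real" where
  "tdist x y = sqrt (\<Sum>i\<in>UNIV. (x$i - y$i - of_int (round (x$i - y$i)))^2)"

definition vderiv :: "(real \<Rightarrow> real^2) \<Rightarrow> real \<Rightarrow> real^2" where
  "vderiv \<gamma> t = vector_derivative \<gamma> (at t within {0..1})"

definition C1_Hol :: "real \<Rightarrow> (real \<Rightarrow> real^2) \<Rightarrow> bool" where
  "C1_Hol \<beta> \<gamma> \<longleftrightarrow> (\<forall>t\<in>{0..1}. \<gamma> differentiable (at t within {0..1})) \<and>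
     (\<exists>H. \<forall>s\<in>{0..1}. \<forall>t\<in>{0..1}. norm (vderiv \<gamma> s - vderiv \<gamma> t) \<le> H * \<bar>s - t\<bar> powr \<beta>)"

definition deriv_sup :: "(real \<Rightarrow> real^2) \<Rightarrow> real" where
  "deriv_sup \<gamma> = (SUP t\<in>{0..1}. norm (vderiv \<gamma> t))"

definition deriv_hol :: "real \<Rightarrow> (real \<Rightarrow> real^2) \<Rightarrow> real" where
  "deriv_hol \<beta> \<gamma> = (SUP p\<in>{(s,t). s \<in> {0..1} \<and> t \<in> {0..1} \<and> s \<noteq> t}.
      norm (vderiv \<gamma> (fst p) - vderiv \<gamma> (snd p)) / \<bar>fst p - snd p\<bar> powr \<beta>)"

definition tsup_dist :: "(real \<Rightarrow> real^2) \<Rightarrow> (real \<Rightarrow> real^2) \<Rightarrow> real" where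
  "tsup_dist \<gamma> \<gamma>' = (SUP t\<in>{0..1}. tdist (\<gamma> t) (\<gamma>' t))"

definition tdiam_le :: "(real \<Rightarrow> real^2) \<Rightarrow> real \<Rightarrow> bool" where
  "tdiam_le \<gamma> r \<longleftrightarrow> (\<forall>s\<in>{0..1}. \<forall>t\<in>{0..1}. tdist (\<gamma> s) (\<gamma> t) \<le> r)"

text \<open>Signed (doubled) area; its sign is the orientation of the triangle.\<close>
definition orient :: "real^2 \<Rightarrow> real^2 \<Rightarrow> real^2 \<Rightarrow> real" where
  "orient a b c = (b-a)$1 * (c-a)$2 - (b-a)$2 * (c-a)$1"

definition ttri :: "real^2 \<Rightarrow> real^2 \<Rightarrow> real^2 \<Rightarrow> (real^2) set" where
  "ttri a b c = tproj ` interior (convex hull {a, b, c})"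

definition tri_dist :: "real^2 \<Rightarrow> real^2 \<Rightarrow> real^2 \<Rightarrow> real^2 \<Rightarrow> real^2 \<Rightarrow> real^2 \<Rightarrow> real" where
  "tri_dist a b c a' b' c' =
     (if orient a b c * orient a' b' c' > 0
      then measure lebesgue ((ttri a b c - ttri a' b' c') \<union> (ttri a' b' c' - ttri a b c))
      else measure lebesgue (ttri a b c) + measure lebesgue (ttri a' b' c'))"

definition loc_dist :: "(real \<Rightarrow> real^2) \<Rightarrow> (real \<Rightarrow> real^2) \<Rightarrow> real \<Rightarrow> real \<Rightarrow> real" where
  "loc_dist \<gamma> \<gamma>' s t = (SUP u\<in>{s..t}.
      sqrt (tri_dist (\<gamma> s) (\<gamma> u) (\<gamma> t) (\<gamma>' s) (\<gamma>' u) (\<gamma>' t)))"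

definition partitions01 :: "real list set" where
  "partitions01 = {ts. sorted_wrt (<) ts \<and> ts \<noteq> [] \<and> hd ts = 0 \<and> last ts = 1}"

definition pvar :: "real \<Rightarrow> (real \<Rightarrow> real^2) \<Rightarrow> (real \<Rightarrow> real^2) \<Rightarrow> ereal" where
  "pvar \<alpha> \<gamma> \<gamma>' = (SUP ts\<in>partitions01.
      ereal (\<Sum>i<length ts - 1. loc_dist \<gamma> \<gamma>' (ts!i) (ts!(i+1)) powr \<alpha>))"

end

theory Submission
  imports Defs
begin

text \<open>
  Fix \<open>0 \<le> s \<le> u \<le> t \<le> 1\<close>, put \<open>h = t - s\<close>, and let \<open>A\<close>, \<open>H\<close> be the sums of the sup norms
  and of the \<open>\<beta>\<close>-Hoelder constants of the two derivatives and \<open>D = |\<gamma> - \<gamma>'|\<^sub>\<infinity>\<close>. A first-order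
  expansion at \<open>s\<close> shows that the triangles \<open>\<gamma>(s) \<gamma>(u) \<gamma>(t)\<close> have area \<open>O(A H h^(2+\<beta>))\<close>, and
  the distance of two triangles is at most a multiple of the sum of their areas. On the other hand,
  the diameter hypothesis lets both paths be lifted to the plane so that, after one lattice
  translation, corresponding vertices are \<open>2 D\<close>-close; as the sides have length \<open>O(A h)\<close>,
  moving the vertices sweeps out an area, and changes the signed area, by \<open>O(A h D)\<close>.
  Interpolating with weights \<open>\<kappa>\<close> and \<open>1 - \<kappa>\<close> bounds the distance of the triangles by
  \<open>O(M h^(1 + (1 + \<beta>) \<kappa>))\<close>, \<open>M\<close> the bracket of the statement. The constraint on \<open>\<kappa>\<close> says
  precisely that \<open>\<alpha> (1 + (1 + \<beta>) \<kappa>) / 2 \<ge> 1\<close>, so \<open>|\<gamma>; \<gamma>'|_[s,t]^\<alpha> = O(M^(\<alpha>/2) h)\<close>, and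
  these bounds add up to \<open>O(M^(\<alpha>/2))\<close> over any partition. Areas on the torus are compared with
  planar areas through the fact that the projection of a set of radius 2 is covered by 49 lattice
  translates of it.
\<close>

section \<open>Planar triangles\<close>

definition cross :: "real^2 \<Rightarrow> real^2 \<Rightarrow> real" where
  "cross u v = u$1 * v$2 - u$2 * v$1"

lemma orient_eq_cross: "orient a b c = cross (b - a) (c - a)"
  by (simp add: orient_def cross_def)

lemma cross_add_left: "cross (x + y) z = cross x z + cross y z"
  and cross_add_right: "cross z (x + y) = cross z x + cross z y"
  and cross_scaleR_left: "cross (r *\<^sub>R x) z = r * cross x z"
  and cross_scaleR_right: "cross z (r *\<^sub>R x) = r * cross z x"
  and cross_self: "cross x x = 0"
  by (simp_all add: cross_def algebra_simps)

lemma abs_cross_le: "\<bar>cross u v\<bar> \<le> norm u * norm v"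
proof -
  have "(cross u v)\<^sup>2 + (u$1 * v$1 + u$2 * v$2)\<^sup>2 = ((u$1)\<^sup>2 + (u$2)\<^sup>2) * ((v$1)\<^sup>2 + (v$2)\<^sup>2)"
    by (simp add: cross_def algebra_simps power2_eq_square)
  then have "sqrt ((cross u v)\<^sup>2) \<le> sqrt (((u$1)\<^sup>2 + (u$2)\<^sup>2) * ((v$1)\<^sup>2 + (v$2)\<^sup>2))"
    by (metis le_add_same_cancel1 real_sqrt_le_mono zero_le_power2)
  then show ?thesis
    by (simp add: norm_vec_def L2_set_def sum_2 real_sqrt_mult)
qed

lemma abs_orient_le: "\<bar>orient a b c\<bar> \<le> norm (b - a) * norm (c - a)"
  unfolding orient_eq_cross by (rule abs_cross_le)

lemma abs_orient_le_sides:
  assumes "\<forall>x\<in>{a, b, c}. \<forall>y\<in>{a, b, c}. norm (x - y) \<le> L"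
  shows "\<bar>orient a b c\<bar> \<le> L * L"
proof -
  have "0 \<le> L"
    using bspec[OF bspec[OF assms], of a a] by simp
  then show ?thesis
    using assms by (intro order_trans[OF abs_orient_le] mult_mono) simp_all
qed

lemma mem_cball_if_sides_le:
  assumes "\<forall>x\<in>{a, b, c}. \<forall>y\<in>{a, b, c}. norm (x - y) \<le> L" "L \<le> 2"
  shows "b \<in> cball a 2" "c \<in> cball a 2"
  using bspec[OF bspec[OF assms(1)], of a b] bspec[OF bspec[OF assms(1)], of a c] assms(2)
  by (simp_all add: dist_norm)

text \<open>Both sides are expansions along the same tangent \<open>v\<close>, which contributes nothing to the
  cross product.\<close>

lemma abs_orient_le_tangent_errors:
  fixes p q w v e1 e2 :: "real^2"
  assumes "q - p = r *\<^sub>R v + e1" "w - p = h *\<^sub>R v + e2" "\<bar>r\<bar> \<le> h"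
    and "norm v \<le> A" "norm e1 \<le> E" "norm e2 \<le> E" "norm (w - p) \<le> A * h"
  shows "\<bar>orient p q w\<bar> \<le> 2 * A * E * h"
proof -
  have A0: "0 \<le> A" and E0: "0 \<le> E"
    using assms(4,5) norm_ge_zero order_trans by blast+
  have "orient p q w = r * cross v e2 + cross e1 (w - p)"
    unfolding orient_eq_cross assms(1) cross_add_left cross_scaleR_left
    by (simp add: assms(2) cross_add_right cross_scaleR_right cross_self)
  moreover have "\<bar>r * cross v e2\<bar> \<le> h * (A * E)"
    unfolding abs_mult using assms(3) order_trans[OF abs_cross_le mult_mono[OF assms(4,6) A0 norm_ge_zero]]
    by (intro mult_mono) auto
  moreover have "\<bar>cross e1 (w - p)\<bar> \<le> E * (A * h)"
    using abs_cross_le[of e1] mult_mono[OF assms(5,7) E0 norm_ge_zero] by (rule order_trans)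
  ultimately show ?thesis
    by (simp add: algebra_simps)
qed

lemma compact_triangle: "compact (convex hull {a, b, c :: real^2})"
  by (intro finite_imp_compact_convex_hull) simp

lemma lmeasurable_triangle: "convex hull {a, b, c :: real^2} \<in> lmeasurable"
  by (intro lmeasurable_compact compact_triangle)

lemma measure_triangle: "measure lebesgue (convex hull {a, b, c :: real^2}) = \<bar>orient a b c\<bar> / 2"
proof -
  have "measure lebesgue (convex hull {a, b, c}) = Henstock_Kurzweil_Integration.content (convex hull {a, b, c})"
    using compact_triangle[of a b c] by (intro measure_completion) (auto dest: compact_imp_closed)
  then show ?thesis
    by (simp add: content_triangle orient_def algebra_simps)
qed

lemma negligible_triangle_frontier: "negligible (frontier (convex hull {a, b, c :: real^2}))"
  by (intro negligible_convex_frontier convex_convex_hull)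

lemma triangle_subset_cball:
  fixes p :: "real^2"
  assumes "a \<in> cball p r" "b \<in> cball p r" "c \<in> cball p r"
  shows "convex hull {a, b, c} \<subseteq> cball p r"
  using assms by (intro hull_minimal) (auto simp: convex_cball)

lemma barycentric_coordinates:
  fixes a b c p :: "real^2"
  assumes "orient a b c \<noteq> 0"
  obtains ma mb mc where "ma + mb + mc = 1" "p = ma *\<^sub>R a + mb *\<^sub>R b + mc *\<^sub>R c"
proof
  define u where "u = b - a"
  define v where "v = c - a"
  define w where "w = p - a"
  have D: "cross u v \<noteq> 0"
    using assms by (simp add: orient_eq_cross u_def v_def)
  define mb where "mb = cross w v / cross u v"
  define mc where "mc = cross u w / cross u v"
  have "cross u v *\<^sub>R w = cross w v *\<^sub>R u + cross u w *\<^sub>R v"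
    unfolding vec_eq_iff forall_2 by (simp add: cross_def algebra_simps)
  then have "(1 / cross u v) *\<^sub>R (cross u v *\<^sub>R w) = (1 / cross u v) *\<^sub>R (cross w v *\<^sub>R u + cross u w *\<^sub>R v)"
    by simp
  then have "w = mb *\<^sub>R u + mc *\<^sub>R v"
    using D by (simp add: mb_def mc_def scaleR_add_right)
  then show "p = (1 - mb - mc) *\<^sub>R a + mb *\<^sub>R b + mc *\<^sub>R c"
    by (simp add: u_def v_def w_def algebra_simps)
qed simp

lemma mem_triangle_replace_vertex:
  fixes a b c p x :: "real^2"
  assumes l: "la \<ge> 0" "lb \<ge> 0" "lc \<ge> 0" "la + lb + lc = 1" "x = la *\<^sub>R a + lb *\<^sub>R b + lc *\<^sub>R c"
    and m: "ma + mb + mc = 1" "p = ma *\<^sub>R a + mb *\<^sub>R b + mc *\<^sub>R c" "ma > 0"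
    and min: "mb > 0 \<Longrightarrow> la / ma \<le> lb / mb" "mc > 0 \<Longrightarrow> la / ma \<le> lc / mc"
  shows "x \<in> convex hull {p, b, c}"
proof -
  define t where "t = la / ma"
  have t: "t \<ge> 0" "t * ma = la"
    using l m by (simp_all add: t_def)
  have "lb - t * mb \<ge> 0"
  proof (cases "mb > 0")
    case True
    then show ?thesis using min(1) by (simp add: t_def field_simps)
  next
    case False
    then show ?thesis using t l mult_nonneg_nonpos[of t mb] by linarith
  qed
  moreover have "lc - t * mc \<ge> 0"
  proof (cases "mc > 0")
    case True
    then show ?thesis using min(2) by (simp add: t_def field_simps)
  next
    case False
    then show ?thesis using t l mult_nonneg_nonpos[of t mc] by linarith
  qed
  moreover have "x = t *\<^sub>R p + (lb - t * mb) *\<^sub>R b + (lc - t * mc) *\<^sub>R c"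
    using l(5) m(2) t(2) by (simp add: algebra_simps)
  moreover have "t * ma + t * mb + t * mc = t"
    using m(1) by (metis distrib_left mult.right_neutral)
  then have "t + (lb - t * mb) + (lc - t * mc) = 1"
    using l(4) t(2) by linarith
  ultimately show ?thesis
    unfolding convex_hull_3 using t(1) by blast
qed

text \<open>Replace the vertex that minimises the ratio of the barycentric coordinates of \<open>x\<close> and \<open>p\<close>
  among those where the coordinate of \<open>p\<close> is positive.\<close>

lemma triangle_subset_subtriangles:
  fixes a b c p :: "real^2"
  assumes "orient a b c \<noteq> 0"
  shows "convex hull {a, b, c} \<subseteq> convex hull {p, b, c} \<union> convex hull {a, p, c} \<union> convex hull {a, b, p}"
proof
  fix x assume "x \<in> convex hull {a, b, c}"
  then obtain la lb lc where l: "la \<ge> 0" "lb \<ge> 0" "lc \<ge> 0" "la + lb + lc = 1"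
    "x = la *\<^sub>R a + lb *\<^sub>R b + lc *\<^sub>R c"
    unfolding convex_hull_3 by blast
  obtain ma mb mc where m: "ma + mb + mc = 1" "p = ma *\<^sub>R a + mb *\<^sub>R b + mc *\<^sub>R c"
    using barycentric_coordinates[OF assms] by blast
  have "(ma > 0 \<and> (mb > 0 \<longrightarrow> la / ma \<le> lb / mb) \<and> (mc > 0 \<longrightarrow> la / ma \<le> lc / mc)) \<or>
        (mb > 0 \<and> (ma > 0 \<longrightarrow> lb / mb \<le> la / ma) \<and> (mc > 0 \<longrightarrow> lb / mb \<le> lc / mc)) \<or>
        (mc > 0 \<and> (ma > 0 \<longrightarrow> lc / mc \<le> la / ma) \<and> (mb > 0 \<longrightarrow> lc / mc \<le> lb / mb))"
    using m(1) by linarith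
  then consider
      "x \<in> convex hull {p, b, c}"
    | "x \<in> convex hull {p, a, c}"
    | "x \<in> convex hull {p, a, b}"
  proof (elim disjE conjE)
    assume "ma > 0" "mb > 0 \<longrightarrow> la / ma \<le> lb / mb" "mc > 0 \<longrightarrow> la / ma \<le> lc / mc"
    then show thesis using that(1) mem_triangle_replace_vertex[OF l m] by blast
  next
    assume "mb > 0" "ma > 0 \<longrightarrow> lb / mb \<le> la / ma" "mc > 0 \<longrightarrow> lb / mb \<le> lc / mc"
    then show thesis
      using that(2) mem_triangle_replace_vertex[of lb la lc x b a c mb ma mc p] l m
      by (simp add: algebra_simps)
  next
    assume "mc > 0" "ma > 0 \<longrightarrow> lc / mc \<le> la / ma" "mb > 0 \<longrightarrow> lc / mc \<le> lb / mb"
    then show thesis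
      using that(3) mem_triangle_replace_vertex[of lc la lb x c a b mc ma mb p] l m
      by (simp add: algebra_simps)
  qed
  then show "x \<in> convex hull {p, b, c} \<union> convex hull {a, p, c} \<union> convex hull {a, b, p}"
    by cases (simp_all add: insert_commute)
qed

lemma measure_triangle_move_vertex_diff_le:
  fixes x y z x' :: "real^2"
  shows "measure lebesgue (convex hull {x, y, z} - convex hull {x', y, z})
    \<le> norm (x' - x) * (norm (y - x) + norm (z - x)) / 2"
proof (cases "orient x y z = 0")
  case True
  have "measure lebesgue (convex hull {x, y, z} - convex hull {x', y, z})
      \<le> measure lebesgue (convex hull {x, y, z})"
    by (intro measure_mono_fmeasurable fmeasurableD lmeasurable_triangle fmeasurable_Diff) auto
  also have "\<dots> = 0"
    using True by (simp add: measure_triangle)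
  also have "0 \<le> norm (x' - x) * (norm (y - x) + norm (z - x)) / 2"
    by simp
  finally show ?thesis .
next
  case False
  have "convex hull {x, y, z} - convex hull {x', y, z} \<subseteq> convex hull {x, x', z} \<union> convex hull {x, y, x'}"
    using triangle_subset_subtriangles[OF False, of x'] by blast
  then have "measure lebesgue (convex hull {x, y, z} - convex hull {x', y, z})
      \<le> measure lebesgue (convex hull {x, x', z} \<union> convex hull {x, y, x'})"
    by (intro measure_mono_fmeasurable fmeasurableD lmeasurable_triangle fmeasurable_Diff
        fmeasurable.Un) auto
  also have "\<dots> \<le> \<bar>orient x x' z\<bar> / 2 + \<bar>orient x y x'\<bar> / 2"
    using measure_Un_le[of "convex hull {x, x', z}" lebesgue "convex hull {x, y, x'}"]
    by (simp add: measure_triangle fmeasurableD lmeasurable_triangle)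
  also have "\<dots> \<le> norm (x' - x) * (norm (y - x) + norm (z - x)) / 2"
    using abs_orient_le[of x x' z] abs_orient_le[of x y x']
    by (simp add: algebra_simps)
  finally show ?thesis .
qed

lemma measure_triangle_diff_le:
  fixes a b c a' b' c' :: "real^2"
  assumes d: "norm (a' - a) \<le> d" "norm (b' - b) \<le> d" "norm (c' - c) \<le> d"
    and m: "\<forall>x\<in>{a, b, c, a', b', c'}. \<forall>y\<in>{a, b, c, a', b', c'}. norm (x - y) \<le> m"
  shows "measure lebesgue (convex hull {a, b, c} - convex hull {a', b', c'}) \<le> 3 * d * m"
proof -
  let ?P = "{a, b, c, a', b', c'}"
  have step: "measure lebesgue (convex hull {x, y, z} - convex hull {x', y, z}) \<le> d * m"
    if "x \<in> ?P" "y \<in> ?P" "z \<in> ?P" "norm (x' - x) \<le> d" for x y z x'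
  proof -
    have "norm (y - x) + norm (z - x) \<le> 2 * m"
      using m that by (metis mult_2 add_mono)
    then have "norm (x' - x) * (norm (y - x) + norm (z - x)) \<le> d * (2 * m)"
      using that(4) order_trans[OF norm_ge_zero that(4)] by (intro mult_mono) auto
    then show ?thesis
      using measure_triangle_move_vertex_diff_le[of x y z x'] by linarith
  qed
  let ?D1 = "convex hull {a, b, c} - convex hull {a', b, c}"
  let ?D2 = "convex hull {b, a', c} - convex hull {b', a', c}"
  let ?D3 = "convex hull {c, a', b'} - convex hull {c', a', b'}"
  have sets: "?D1 \<in> sets lebesgue" "?D2 \<in> sets lebesgue" "?D3 \<in> sets lebesgue"
    by (intro fmeasurableD fmeasurable_Diff lmeasurable_triangle; simp)+
  have "convex hull {a, b, c} - convex hull {a', b', c'} \<subseteq> ?D1 \<union> ?D2 \<union> ?D3"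
    by (auto simp: insert_commute)
  then have "measure lebesgue (convex hull {a, b, c} - convex hull {a', b', c'})
      \<le> measure lebesgue (?D1 \<union> ?D2 \<union> ?D3)"
    by (intro measure_mono_fmeasurable fmeasurableD fmeasurable_Diff fmeasurable.Un lmeasurable_triangle)
      auto
  also have "\<dots> \<le> measure lebesgue ?D1 + measure lebesgue ?D2 + measure lebesgue ?D3"
    using measure_Un_le[OF sets(1,2)] measure_Un_le[OF sets.Un[OF sets(1,2)] sets(3)] by linarith
  also have "\<dots> \<le> 3 * d * m"
    using step[of a b c a'] step[of b a' c b'] step[of c a' b' c'] d by simp
  finally show ?thesis .
qed

lemma measure_triangle_symdiff_le:
  fixes a b c a' b' c' :: "real^2"
  assumes d: "norm (a' - a) \<le> d" "norm (b' - b) \<le> d" "norm (c' - c) \<le> d"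
    and l: "\<forall>x\<in>{a, b, c}. \<forall>y\<in>{a, b, c}. norm (x - y) \<le> l"
  shows "measure lebesgue (sym_diff (convex hull {a, b, c}) (convex hull {a', b', c'})) \<le> 6 * d * (l + 2 * d)"
proof -
  let ?P = "{a, b, c, a', b', c'}"
  have d0: "0 \<le> d"
    using d(1) norm_ge_zero order_trans by blast
  have near: "\<exists>x0\<in>{a, b, c}. norm (x - x0) \<le> d" if "x \<in> ?P" for x
    using that by (elim insertE emptyE) (use d d0 in \<open>simp_all add: norm_minus_commute\<close>)
  have m: "\<forall>x\<in>?P. \<forall>y\<in>?P. norm (x - y) \<le> l + 2 * d"
  proof (intro ballI)
    fix x y assume "x \<in> ?P" "y \<in> ?P"
    then obtain x0 y0 where x0: "x0 \<in> {a, b, c}" "norm (x - x0) \<le> d"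
      and y0: "y0 \<in> {a, b, c}" "norm (y0 - y) \<le> d"
      using near by (metis norm_minus_commute)
    have "norm (x - y0) \<le> d + l"
      using x0 y0 l by (intro norm_diff_triangle_le[of x x0]) auto
    then have "norm (x - y) \<le> (d + l) + d"
      using y0(2) by (rule norm_diff_triangle_le)
    then show "norm (x - y) \<le> l + 2 * d"
      by simp
  qed
  have "measure lebesgue (convex hull {a, b, c} - convex hull {a', b', c'}) \<le> 3 * d * (l + 2 * d)"
    using d m by (rule measure_triangle_diff_le)
  moreover have "measure lebesgue (convex hull {a', b', c'} - convex hull {a, b, c}) \<le> 3 * d * (l + 2 * d)"
    using d m by (intro measure_triangle_diff_le) (auto simp: norm_minus_commute)
  ultimately show ?thesis
    using measure_Un_le[of "convex hull {a, b, c} - convex hull {a', b', c'}" lebesgue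
        "convex hull {a', b', c'} - convex hull {a, b, c}"]
    by (simp add: fmeasurableD fmeasurable_Diff lmeasurable_triangle)
qed

section \<open>Triangles on the torus\<close>

definition nearest_lattice :: "real^2 \<Rightarrow> real^2" where
  "nearest_lattice x = (\<chi> i. of_int (round (x$i)))"

lemma tproj_eq: "tproj x = x - nearest_lattice x"
  by (simp add: tproj_def nearest_lattice_def vec_eq_iff)

lemma tproj_add_lattice:
  assumes "\<forall>i. k$i \<in> \<int>"
  shows "tproj (x + k) = tproj x"
proof -
  have "x$i + k$i - of_int (round (x$i + k$i)) = x$i - of_int (round (x$i))" for i
  proof -
    obtain n where n: "k$i = of_int n"
      using assms Ints_cases by blast
    have "round (x$i + of_int n) = round (x$i) + n"
      by (rule round_unique) (use of_int_round_gt[of "x$i"] of_int_round_le[of "x$i"] in auto)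
    then show ?thesis
      by (simp add: n)
  qed
  then show ?thesis
    by (simp add: tproj_def vec_eq_iff)
qed

text \<open>A point within distance 2 of \<open>p\<close> rounds to one of these \<open>7\<^sup>2 = 49\<close> lattice points.\<close>

definition lattice_near :: "real^2 \<Rightarrow> (real^2) set" where
  "lattice_near p = (\<lambda>(m, n). nearest_lattice p + vector [of_int m, of_int n]) ` ({-3..3} \<times> {-3..3})"

lemma finite_lattice_near: "finite (lattice_near p)"
  by (simp add: lattice_near_def)

lemma card_lattice_near: "card (lattice_near p) \<le> 49"
proof -
  have "card (lattice_near p) \<le> card ({-3..3::int} \<times> {-3..3::int})"
    unfolding lattice_near_def by (rule card_image_le) simp
  then show ?thesis
    by (simp add: card_cartesian_product)
qed

lemma round_diff_mem:
  assumes "\<bar>x - y\<bar> \<le> (2::real)"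
  shows "round x - round y \<in> {-3..3}"
  using assms of_int_round_le[of x] of_int_round_gt[of x] of_int_round_le[of y] of_int_round_gt[of y]
  by (simp add: abs_le_iff)

lemma tproj_image_subset_translates:
  assumes "F \<subseteq> cball p 2"
  shows "tproj ` F \<subseteq> (\<Union>k\<in>lattice_near p. (\<lambda>x. x - k) ` F)"
proof
  fix y assume "y \<in> tproj ` F"
  then obtain x where x: "x \<in> F" "y = x - nearest_lattice x"
    by (auto simp: tproj_eq)
  then have "\<bar>x$i - p$i\<bar> \<le> 2" for i
    using assms component_le_norm_cart[of "x - p" i] by (auto simp: dist_norm norm_minus_commute)
  then have "(round (x$1) - round (p$1), round (x$2) - round (p$2)) \<in> {-3..3} \<times> {-3..3}"
    using round_diff_mem by blast
  moreover have "nearest_lattice x = (\<lambda>(m, n). nearest_lattice p + vector [of_int m, of_int n])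
      (round (x$1) - round (p$1), round (x$2) - round (p$2))"
    by (simp add: nearest_lattice_def vec_eq_iff forall_2)
  ultimately have "nearest_lattice x \<in> lattice_near p"
    unfolding lattice_near_def by (rule image_eqI[rotated])
  then show "y \<in> (\<Union>k\<in>lattice_near p. (\<lambda>x. x - k) ` F)"
    using x by blast
qed

lemma lmeasurable_UN_translates:
  fixes F :: "'a::euclidean_space set"
  assumes "finite K" "F \<in> lmeasurable"
  shows "(\<Union>k\<in>K. (\<lambda>x. x - k) ` F) \<in> lmeasurable"
  using assms by (intro fmeasurable.finite_UN measurable_translation_subtract)

lemma measure_UN_translates_le:
  fixes F :: "'a::euclidean_space set"
  assumes "finite K" "F \<in> lmeasurable"
  shows "measure lebesgue (\<Union>k\<in>K. (\<lambda>x. x - k) ` F) \<le> card K * measure lebesgue F"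
proof -
  have "measure lebesgue (\<Union>k\<in>K. (\<lambda>x. x - k) ` F) \<le> (\<Sum>k\<in>K. measure lebesgue ((\<lambda>x. x - k) ` F))"
    using assms measurable_translation_subtract[OF assms(2)] by (intro measure_UNION_le) auto
  then show ?thesis
    by (simp add: measure_translation_subtract)
qed

lemma measure_le_fmeasurable_superset:
  assumes "A \<subseteq> B" "B \<in> fmeasurable M"
  shows "measure M A \<le> measure M B"
proof (cases "A \<in> sets M")
  case True
  then show ?thesis using assms by (intro measure_mono_fmeasurable)
next
  case False
  then show ?thesis by (simp add: measure_notin_sets)
qed

lemma measure_le_tproj_images:
  assumes "X \<subseteq> tproj ` F \<union> tproj ` G" "F \<subseteq> cball p 2" "G \<subseteq> cball q 2"
    and "F \<in> lmeasurable" "G \<in> lmeasurable"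
  shows "measure lebesgue X \<le> 49 * (measure lebesgue F + measure lebesgue G)"
proof -
  let ?U = "\<lambda>p F. \<Union>k\<in>lattice_near p. (\<lambda>x. x - k) ` F"
  have U: "?U p F \<in> lmeasurable" "?U q G \<in> lmeasurable"
    using assms(4,5) by (simp_all add: lmeasurable_UN_translates finite_lattice_near)
  have "X \<subseteq> ?U p F \<union> ?U q G"
    using assms(1) Un_mono[OF tproj_image_subset_translates[OF assms(2)] tproj_image_subset_translates[OF assms(3)]]
    by (rule order_trans)
  then have "measure lebesgue X \<le> measure lebesgue (?U p F \<union> ?U q G)"
    by (intro measure_le_fmeasurable_superset fmeasurable.Un U)
  also have "\<dots> \<le> measure lebesgue (?U p F) + measure lebesgue (?U q G)"
    using measure_Un_le[OF fmeasurableD[OF U(1)] fmeasurableD[OF U(2)]] .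
  also have "\<dots> \<le> card (lattice_near p) * measure lebesgue F + card (lattice_near q) * measure lebesgue G"
    using assms(4,5) by (intro add_mono measure_UN_translates_le finite_lattice_near)
  also have "\<dots> \<le> 49 * measure lebesgue F + 49 * measure lebesgue G"
    using card_lattice_near by (intro add_mono mult_right_mono) simp_all
  finally show ?thesis
    by (simp add: distrib_left)
qed

lemma measure_le_tproj_image:
  assumes "X \<subseteq> tproj ` F" "F \<subseteq> cball p 2" "F \<in> lmeasurable"
  shows "measure lebesgue X \<le> 49 * measure lebesgue F"
  using measure_le_tproj_images[of X F "{}", OF _ assms(2) empty_subsetI assms(3)] assms(1) by simp

lemma orient_translate: "orient (a + k) (b + k) (c + k) = orient a b c"
  by (simp add: orient_def)

lemma ttri_translate:
  assumes "\<forall>i. k$i \<in> \<int>"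
  shows "ttri (a + k) (b + k) (c + k) = ttri a b c"
proof -
  have "{a + k, b + k, c + k} = (+) k ` {a, b, c}"
    by (simp add: add.commute)
  then have "interior (convex hull {a + k, b + k, c + k}) = (+) k ` interior (convex hull {a, b, c})"
    by (simp only: convex_hull_translation interior_translation)
  then show ?thesis
    unfolding ttri_def using tproj_add_lattice[OF assms] by (simp add: image_image add.commute)
qed

lemma tri_dist_translate:
  assumes "\<forall>i. k$i \<in> \<int>"
  shows "tri_dist a b c (a' + k) (b' + k) (c' + k) = tri_dist a b c a' b' c'"
  by (simp add: tri_dist_def ttri_translate[OF assms] orient_translate)

lemma tri_dist_nonneg: "0 \<le> tri_dist a b c a' b' c'"
  by (simp add: tri_dist_def)

lemma ttri_subset_tproj: "ttri a b c \<subseteq> tproj ` (convex hull {a, b, c})"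
  unfolding ttri_def by (rule image_mono[OF interior_subset])

lemma measure_ttri_le:
  assumes "b \<in> cball a 2" "c \<in> cball a 2"
  shows "measure lebesgue (ttri a b c) \<le> 49/2 * \<bar>orient a b c\<bar>"
proof -
  have H: "convex hull {a, b, c} \<subseteq> cball a 2"
    using assms by (intro triangle_subset_cball) auto
  show ?thesis
    using measure_le_tproj_image[OF ttri_subset_tproj H lmeasurable_triangle]
    by (simp add: measure_triangle)
qed

lemma tri_dist_le_areas:
  assumes "b \<in> cball a 2" "c \<in> cball a 2" "b' \<in> cball a' 2" "c' \<in> cball a' 2"
  shows "tri_dist a b c a' b' c' \<le> 49/2 * (\<bar>orient a b c\<bar> + \<bar>orient a' b' c'\<bar>)"
proof (cases "orient a b c * orient a' b' c' > 0")
  case True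
  have "sym_diff (ttri a b c) (ttri a' b' c') \<subseteq> tproj ` (convex hull {a, b, c}) \<union> tproj ` (convex hull {a', b', c'})"
    using ttri_subset_tproj[of a b c] ttri_subset_tproj[of a' b' c'] by blast
  then have "measure lebesgue (sym_diff (ttri a b c) (ttri a' b' c'))
      \<le> 49 * (measure lebesgue (convex hull {a, b, c}) + measure lebesgue (convex hull {a', b', c'}))"
    using assms by (intro measure_le_tproj_images triangle_subset_cball lmeasurable_triangle) auto
  then show ?thesis
    using True by (simp add: tri_dist_def measure_triangle)
next
  case False
  then show ?thesis
    using measure_ttri_le[OF assms(1,2)] measure_ttri_le[OF assms(3,4)] by (simp add: tri_dist_def)
qed

lemma tri_dist_le_sides:
  assumes "\<forall>x\<in>{a, b, c}. \<forall>y\<in>{a, b, c}. norm (x - y) \<le> L" "L \<le> 2"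
    and "\<forall>x\<in>{a', b', c'}. \<forall>y\<in>{a', b', c'}. norm (x - y) \<le> L'" "L' \<le> 2"
  shows "tri_dist a b c a' b' c' \<le> 49/2 * (L * L + L' * L')"
proof -
  have "tri_dist a b c a' b' c' \<le> 49/2 * (\<bar>orient a b c\<bar> + \<bar>orient a' b' c'\<bar>)"
    using mem_cball_if_sides_le[OF assms(1,2)] mem_cball_if_sides_le[OF assms(3,4)]
    by (rule tri_dist_le_areas)
  then show ?thesis
    using abs_orient_le_sides[OF assms(1)] abs_orient_le_sides[OF assms(3)] by simp
qed

lemma tri_dist_le_opposite_orient:
  assumes "b \<in> cball a 2" "c \<in> cball a 2" "b' \<in> cball a' 2" "c' \<in> cball a' 2"
    and "orient a b c * orient a' b' c' \<le> 0"
  shows "tri_dist a b c a' b' c' \<le> 49/2 * \<bar>orient a b c - orient a' b' c'\<bar>"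
proof -
  have "\<bar>orient a b c\<bar> + \<bar>orient a' b' c'\<bar> = \<bar>orient a b c - orient a' b' c'\<bar>"
    using assms(5) by (auto simp: mult_le_0_iff)
  then show ?thesis
    using tri_dist_le_areas[OF assms(1-4)] by simp
qed

lemma abs_orient_diff_le:
  fixes a b c a' b' c' :: "real^2"
  assumes "norm (a' - a) \<le> d" "norm (b' - b) \<le> d" "norm (c' - c) \<le> d"
    and "norm (c - a) \<le> L" "norm (b' - a') \<le> L'"
  shows "\<bar>orient a b c - orient a' b' c'\<bar> \<le> 2 * d * (L + L')"
proof -
  have eq: "orient a b c - orient a' b' c' =
      cross ((a' - a) - (b' - b)) (c - a) + cross (b' - a') ((a' - a) - (c' - c))"
    by (simp add: orient_def cross_def algebra_simps)
  have "norm ((a' - a) - (b' - b)) \<le> 2 * d" "norm ((a' - a) - (c' - c)) \<le> 2 * d"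
    using assms(1-3) norm_triangle_ineq4[of "a' - a"] by (smt (verit))+
  moreover have "0 \<le> d" "0 \<le> L'"
    using assms(1,5) norm_ge_zero order_trans by blast+
  ultimately have "\<bar>cross ((a' - a) - (b' - b)) (c - a)\<bar> \<le> 2 * d * L"
    "\<bar>cross (b' - a') ((a' - a) - (c' - c))\<bar> \<le> L' * (2 * d)"
    using assms(4,5) by (intro order_trans[OF abs_cross_le] mult_mono; simp)+
  then show ?thesis
    unfolding eq by (simp add: algebra_simps)
qed

lemma ttri_sym_diff_subset:
  "sym_diff (ttri a b c) (ttri a' b' c') \<subseteq> tproj ` (sym_diff (convex hull {a, b, c}) (convex hull {a', b', c'})
     \<union> frontier (convex hull {a, b, c}) \<union> frontier (convex hull {a', b', c'}))"
proof -
  have closed: "closed (convex hull {x, y, z :: real^2})" for x y z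
    by (intro compact_imp_closed compact_triangle)
  have "sym_diff (interior (convex hull {a, b, c})) (interior (convex hull {a', b', c'}))
     \<subseteq> sym_diff (convex hull {a, b, c}) (convex hull {a', b', c'})
       \<union> frontier (convex hull {a, b, c}) \<union> frontier (convex hull {a', b', c'})"
    using interior_subset[of "convex hull {a, b, c}"] interior_subset[of "convex hull {a', b', c'}"]
    by (auto simp: frontier_def closure_closed[OF closed])
  then show ?thesis
    unfolding ttri_def by blast
qed

lemma measure_ttri_sym_diff_le:
  fixes a b c a' b' c' :: "real^2"
  assumes d: "norm (a' - a) \<le> d" "norm (b' - b) \<le> d" "norm (c' - c) \<le> d"
    and L: "\<forall>x\<in>{a, b, c}. \<forall>y\<in>{a, b, c}. norm (x - y) \<le> L" and "L + d \<le> 2"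
  shows "measure lebesgue (sym_diff (ttri a b c) (ttri a' b' c')) \<le> 294 * d * (L + 2 * d)"
proof -
  have d0: "0 \<le> d"
    using d(1) norm_ge_zero order_trans by blast
  let ?H = "convex hull {a, b, c}" and ?H' = "convex hull {a', b', c'}"
  let ?E = "sym_diff ?H ?H' \<union> frontier ?H \<union> frontier ?H'"
  have near_a: "x \<in> cball a 2" if x: "x \<in> {a, b, c, a', b', c'}" for x
  proof -
    have "\<exists>y\<in>{a, b, c}. norm (x - y) \<le> d"
      using x by (elim insertE emptyE) (use d d0 in simp_all)
    then obtain y where y: "y \<in> {a, b, c}" "norm (x - y) \<le> d" ..
    then have "norm (y - a) \<le> L"
      using L(1) by blast
    then have "norm (x - a) \<le> d + L"
      by (rule norm_diff_triangle_le[OF y(2)])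
    then show ?thesis
      using \<open>L + d \<le> 2\<close> by (simp add: dist_norm norm_minus_commute)
  qed
  have "?H \<union> ?H' \<subseteq> cball a 2"
    using near_a by (intro Un_least triangle_subset_cball) auto
  then have E_cball: "?E \<subseteq> cball a 2"
    using frontier_subset_closed[OF compact_imp_closed[OF compact_triangle], of a b c]
      frontier_subset_closed[OF compact_imp_closed[OF compact_triangle], of a' b' c']
    by blast
  have null: "frontier ?H \<union> frontier ?H' \<in> null_sets lebesgue"
    by (simp add: negligible_iff_null_sets[symmetric] negligible_triangle_frontier)
  have sd: "sym_diff ?H ?H' \<in> lmeasurable"
    by (intro fmeasurable.Un fmeasurable_Diff lmeasurable_triangle fmeasurableD)
  have "?E = sym_diff ?H ?H' \<union> (frontier ?H \<union> frontier ?H')"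
    by blast
  then have E: "?E \<in> lmeasurable" "measure lebesgue ?E = measure lebesgue (sym_diff ?H ?H')"
    using sd null by (simp_all add: measure_Un_null_set fmeasurableD fmeasurable.Un
        lmeasurable_compact compact_frontier compact_triangle)
  have "measure lebesgue (sym_diff (ttri a b c) (ttri a' b' c')) \<le> 49 * measure lebesgue ?E"
    by (rule measure_le_tproj_image[OF ttri_sym_diff_subset E_cball E(1)])
  also have "\<dots> \<le> 49 * (6 * d * (L + 2 * d))"
    using E(2) measure_triangle_symdiff_le[OF d(1-3) L(1)] by simp
  finally show ?thesis
    by simp
qed

text \<open>Three regimes: if the displacement exceeds the sides, both triangles are small; for opposite
  orientations the areas differ by at least their sum; otherwise the symmetric difference is swept
  out by the moving sides.\<close>

lemma tri_dist_le_displacement: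
  fixes a b c a' b' c' :: "real^2"
  assumes d: "norm (a' - a) \<le> d" "norm (b' - b) \<le> d" "norm (c' - c) \<le> d" "d \<le> 1/2"
    and L: "\<forall>x\<in>{a, b, c}. \<forall>y\<in>{a, b, c}. norm (x - y) \<le> L" "L \<le> 1/2"
    and L': "\<forall>x\<in>{a', b', c'}. \<forall>y\<in>{a', b', c'}. norm (x - y) \<le> L'" "L' \<le> 1/2"
  shows "tri_dist a b c a' b' c' \<le> 882 * (L + L') * d"
proof -
  let ?S = "orient a b c" and ?S' = "orient a' b' c'"
  have d0: "0 \<le> d"
    using d(1) norm_ge_zero order_trans by blast
  have L0: "0 \<le> L" "0 \<le> L'"
    using bspec[OF bspec[OF L(1)], of a a] bspec[OF bspec[OF L'(1)], of a' a'] by simp_all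
  have cb: "b \<in> cball a 2" "c \<in> cball a 2" "b' \<in> cball a' 2" "c' \<in> cball a' 2"
    using mem_cball_if_sides_le[OF L(1)] mem_cball_if_sides_le[OF L'(1)] L(2) L'(2) by simp_all
  have X0: "0 \<le> (L + L') * d"
    using L0 d0 by simp
  consider (far) "L + L' \<le> d" | (opposite) "d < L + L'" "?S * ?S' \<le> 0" | (same) "d < L + L'" "?S * ?S' > 0"
    by linarith
  then show ?thesis
  proof cases
    case far
    then have "L * L \<le> L * d" "L' * L' \<le> L' * d"
      using L0 by (intro mult_left_mono; simp)+
    then have "tri_dist a b c a' b' c' \<le> 49/2 * ((L + L') * d)"
      using tri_dist_le_sides[OF L(1) _ L'(1)] L(2) L'(2) by (simp add: algebra_simps)
    also have "\<dots> \<le> 882 * (L + L') * d"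
      by (subst mult.assoc) (use X0 in linarith)
    finally show ?thesis .
  next
    case opposite
    have "tri_dist a b c a' b' c' \<le> 49/2 * \<bar>?S - ?S'\<bar>"
      by (rule tri_dist_le_opposite_orient[OF cb opposite(2)])
    also have "\<dots> \<le> 49/2 * (2 * d * (L + L'))"
      using d L L' by (intro mult_left_mono abs_orient_diff_le) auto
    finally have "tri_dist a b c a' b' c' \<le> 49 * ((L + L') * d)"
      by (simp add: algebra_simps)
    also have "\<dots> \<le> 882 * (L + L') * d"
      by (subst mult.assoc) (use X0 in linarith)
    finally show ?thesis .
  next
    case same
    have "tri_dist a b c a' b' c' = measure lebesgue (sym_diff (ttri a b c) (ttri a' b' c'))"
      using same by (simp add: tri_dist_def)
    also have "\<dots> \<le> 294 * d * (L + 2 * d)"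
      using d L by (intro measure_ttri_sym_diff_le[OF d(1-3) L(1)]) simp
    also have "\<dots> \<le> 882 * (L + L') * d"
    proof -
      have "d * (L + 2 * d) \<le> d * (3 * (L + L'))"
        using same(1) L0 d0 by (intro mult_left_mono) auto
      then show ?thesis
        by (simp add: algebra_simps)
    qed
    finally show ?thesis .
  qed
qed

lemma tri_dist_le_lattice_displacement:
  fixes a b c a' b' c' :: "real^2"
  assumes k: "\<forall>i. k$i \<in> \<int>"
    and d: "norm (a' + k - a) \<le> d" "norm (b' + k - b) \<le> d" "norm (c' + k - c) \<le> d" "d \<le> 1/2"
    and L: "\<forall>x\<in>{a, b, c}. \<forall>y\<in>{a, b, c}. norm (x - y) \<le> L" "L \<le> 1/2"
    and L': "\<forall>x\<in>{a', b', c'}. \<forall>y\<in>{a', b', c'}. norm (x - y) \<le> L'" "L' \<le> 1/2"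
  shows "tri_dist a b c a' b' c' \<le> 882 * (L + L') * d"
proof -
  have "\<forall>x\<in>{a' + k, b' + k, c' + k}. \<forall>y\<in>{a' + k, b' + k, c' + k}. norm (x - y) \<le> L'"
    using L'(1) by simp
  then have "tri_dist a b c (a' + k) (b' + k) (c' + k) \<le> 882 * (L + L') * d"
    by (rule tri_dist_le_displacement[OF d L _ L'(2)])
  then show ?thesis
    by (simp add: tri_dist_translate[OF k])
qed

section \<open>Lifts of paths of small diameter\<close>

text \<open>The function cannot cross a half-integer.\<close>

lemma round_eq_on_connected:
  fixes f :: "'a::topological_space \<Rightarrow> real"
  assumes S: "connected S" "continuous_on S f"
    and D: "D < 1/2" "\<And>x. x \<in> S \<Longrightarrow> \<bar>f x - of_int (round (f x))\<bar> \<le> D"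
    and "x \<in> S" "y \<in> S"
  shows "round (f x) = round (f y)"
proof -
  have "\<not> round (f x) < round (f y)" if x: "x \<in> S" and y: "y \<in> S" for x y
  proof
    assume lt: "round (f x) < round (f y)"
    let ?z = "of_int (round (f x)) + 1/2 :: real"
    have "f x \<le> ?z" "?z \<le> f y"
      using D(1) D(2)[OF x] D(2)[OF y] lt by (auto simp: abs_le_iff)
    moreover have "connected (f ` S)"
      using S by (intro connected_continuous_image)
    ultimately have "?z \<in> f ` S"
      using x y unfolding connected_iff_interval by blast
    then obtain w where w: "w \<in> S" "f w = ?z"
      by auto
    have "round ?z = round (f x) + 1"
      by (rule round_unique) auto
    then show False
      using D(1) D(2)[OF w(1)] w(2) by simp
  qed
  then show ?thesis
    using assms(5,6) by (meson linorder_neqE)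
qed

lemma tdist_component_le: "\<bar>x$i - y$i - of_int (round (x$i - y$i))\<bar> \<le> tdist x y"
proof -
  let ?g = "\<lambda>j. (x$j - y$j - of_int (round (x$j - y$j)))\<^sup>2"
  have "?g i \<le> ?g 1 + ?g 2"
    using exhaust_2[of i] by auto
  then have "sqrt (?g i) \<le> sqrt (?g 1 + ?g 2)"
    by (rule real_sqrt_le_mono)
  then show ?thesis
    by (simp add: tdist_def sum_2)
qed

lemma tdist_le_1: "tdist x y \<le> 1"
proof -
  have "(z - of_int (round z))\<^sup>2 \<le> 1/4" for z :: real
  proof -
    have "\<bar>z - of_int (round z)\<bar> \<le> 1/2"
      using of_int_round_abs_le[of z] by (simp add: abs_minus_commute)
    then have "\<bar>z - of_int (round z)\<bar>\<^sup>2 \<le> (1/2)\<^sup>2"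
      by (intro power_mono) auto
    then show ?thesis
      by (simp add: power2_eq_square)
  qed
  from this[of "x$1 - y$1"] this[of "x$2 - y$2"]
  have "(\<Sum>i\<in>UNIV. (x$i - y$i - of_int (round (x$i - y$i)))\<^sup>2) \<le> 1"
    unfolding sum_2 by linarith
  then show ?thesis
    by (simp add: tdist_def)
qed

lemma norm_le_abs_components: "norm (x :: real^2) \<le> \<bar>x$1\<bar> + \<bar>x$2\<bar>"
  using norm_le_l1_cart[of x] by (simp add: sum_2)

lemma norm_diff_le_if_tdiam_le:
  assumes "continuous_on {0..1} \<gamma>" "tdiam_le \<gamma> r" "r < 1/2" "x \<in> {0..1}" "y \<in> {0..1}"
  shows "norm (\<gamma> x - \<gamma> y) \<le> 2 * r"
proof -
  have "\<bar>\<gamma> x $ i - \<gamma> y $ i\<bar> \<le> r" for i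
  proof -
    let ?f = "\<lambda>z. \<gamma> z $ i - \<gamma> y $ i"
    have close: "\<bar>?f z - of_int (round (?f z))\<bar> \<le> r" if "z \<in> {0..1}" for z
      using tdist_component_le[where x="\<gamma> z" and y="\<gamma> y" and i=i] assms(2,5) that
      unfolding tdiam_le_def by (meson order_trans)
    have "continuous_on {0..1} ?f"
      by (intro continuous_intros assms(1))
    then have "round (?f x) = round (?f y)"
      by (rule round_eq_on_connected[OF connected_Icc _ assms(3) close assms(4,5)])
    then show ?thesis
      using close[OF assms(4)] by simp
  qed
  from this[of 1] this[of 2] show ?thesis
    using norm_le_abs_components[of "\<gamma> x - \<gamma> y"] by simp
qed

lemma bdd_above_tdist: "bdd_above ((\<lambda>t. tdist (\<gamma> t) (\<gamma>' t)) ` S)"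
  using tdist_le_1 by (intro bdd_aboveI2) auto

lemma tdist_le_tsup_dist:
  assumes "x \<in> {0..1}"
  shows "tdist (\<gamma> x) (\<gamma>' x) \<le> tsup_dist \<gamma> \<gamma>'"
  unfolding tsup_dist_def by (rule cSUP_upper[OF assms bdd_above_tdist])

lemma tsup_dist_nonneg: "0 \<le> tsup_dist \<gamma> \<gamma>'"
  using tdist_le_tsup_dist[of 0 \<gamma> \<gamma>'] by (simp add: tdist_def) (meson order_trans real_sqrt_ge_zero sum_nonneg zero_le_power2)

lemma common_lattice_shift:
  assumes "continuous_on {0..1} \<gamma>" "continuous_on {0..1} \<gamma>'" "tsup_dist \<gamma> \<gamma>' < 1/2"
  obtains k where "\<forall>i. k$i \<in> \<int>" "\<And>x. x \<in> {0..1} \<Longrightarrow> norm (\<gamma>' x + k - \<gamma> x) \<le> 2 * tsup_dist \<gamma> \<gamma>'"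
proof
  let ?D = "tsup_dist \<gamma> \<gamma>'"
  let ?f = "\<lambda>i z. \<gamma> z $ i - \<gamma>' z $ i"
  have cont: "continuous_on {0..1} (?f i)" for i
    by (intro continuous_intros assms(1,2))
  have close: "\<bar>?f i z - of_int (round (?f i z))\<bar> \<le> ?D" if "z \<in> {0..1}" for i z
    using tdist_component_le order_trans tdist_le_tsup_dist[OF that] by blast
  define k :: "real^2" where "k = (\<chi> i. of_int (round (?f i 0)))"
  show "\<forall>i. k$i \<in> \<int>"
    by (simp add: k_def)
  show "norm (\<gamma>' x + k - \<gamma> x) \<le> 2 * ?D" if x: "x \<in> {0..1}" for x
  proof -
    have "round (?f i x) = round (?f i 0)" for i
      by (rule round_eq_on_connected[OF connected_Icc cont assms(3) close x]) auto
    then have "(\<gamma>' x + k - \<gamma> x) $ i = - (?f i x - of_int (round (?f i x)))" for i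
      by (simp add: k_def)
    then have "\<bar>(\<gamma>' x + k - \<gamma> x) $ i\<bar> \<le> ?D" for i
      using close[OF x, of i] by simp
    from this[of 1] this[of 2] show ?thesis
      using norm_le_abs_components[of "\<gamma>' x + k - \<gamma> x"] by linarith
  qed
qed

section \<open>Paths of class \<open>C\<^sup>1\<^sup>,\<^sup>\<beta>\<close>\<close>

lemma C1_Hol_has_vector_derivative:
  assumes "C1_Hol \<beta> \<gamma>" "t \<in> {0..1}"
  shows "(\<gamma> has_vector_derivative vderiv \<gamma> t) (at t within {0..1})"
  using assms unfolding C1_Hol_def vderiv_def by (simp add: vector_derivative_works[symmetric])

lemma C1_Hol_continuous_on:
  assumes "C1_Hol \<beta> \<gamma>"
  shows "continuous_on {0..1} \<gamma>"
  using assms unfolding C1_Hol_def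
  by (auto simp: continuous_on_eq_continuous_within intro: differentiable_imp_continuous_within)

lemma norm_vderiv_le_deriv_sup:
  assumes "C1_Hol \<beta> \<gamma>" "0 \<le> \<beta>" "t \<in> {0..1}"
  shows "norm (vderiv \<gamma> t) \<le> deriv_sup \<gamma>"
proof -
  obtain H where H: "\<And>s t. s \<in> {0..1} \<Longrightarrow> t \<in> {0..1} \<Longrightarrow> norm (vderiv \<gamma> s - vderiv \<gamma> t) \<le> H * \<bar>s - t\<bar> powr \<beta>"
    using assms(1) unfolding C1_Hol_def by blast
  have "norm (vderiv \<gamma> t) \<le> norm (vderiv \<gamma> 0) + \<bar>H\<bar>" if "t \<in> {0..1}" for t
  proof -
    have "\<bar>t\<bar> powr \<beta> \<le> 1"
      using that assms(2) by (auto intro: powr_le1)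
    have "H * \<bar>t\<bar> powr \<beta> \<le> \<bar>H\<bar> * \<bar>t\<bar> powr \<beta>"
      by (intro mult_right_mono) auto
    also have "\<dots> \<le> \<bar>H\<bar>"
      using \<open>\<bar>t\<bar> powr \<beta> \<le> 1\<close> by (intro mult_left_le) auto
    finally have "H * \<bar>t\<bar> powr \<beta> \<le> \<bar>H\<bar>" .
    moreover have "norm (vderiv \<gamma> t) \<le> norm (vderiv \<gamma> 0) + norm (vderiv \<gamma> t - vderiv \<gamma> 0)"
      by (metis add.commute diff_add_cancel norm_triangle_ineq)
    ultimately show ?thesis
      using H[OF that, of 0] by simp
  qed
  then have "bdd_above ((\<lambda>t. norm (vderiv \<gamma> t)) ` {0..1})"
    by (intro bdd_aboveI2) auto
  then show ?thesis
    unfolding deriv_sup_def using assms(3) by (rule cSUP_upper2) simp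
qed

lemma deriv_sup_nonneg:
  assumes "C1_Hol \<beta> \<gamma>" "0 \<le> \<beta>"
  shows "0 \<le> deriv_sup \<gamma>"
proof -
  have "norm (vderiv \<gamma> 0) \<le> deriv_sup \<gamma>"
    by (rule norm_vderiv_le_deriv_sup[OF assms]) simp
  then show ?thesis
    by (meson norm_ge_zero order_trans)
qed

lemma norm_vderiv_diff_le_deriv_hol:
  assumes "C1_Hol \<beta> \<gamma>" "s \<in> {0..1}" "t \<in> {0..1}"
  shows "norm (vderiv \<gamma> s - vderiv \<gamma> t) \<le> deriv_hol \<beta> \<gamma> * \<bar>s - t\<bar> powr \<beta>"
proof (cases "s = t")
  case False
  obtain H where H: "\<And>s t. s \<in> {0..1} \<Longrightarrow> t \<in> {0..1} \<Longrightarrow> norm (vderiv \<gamma> s - vderiv \<gamma> t) \<le> H * \<bar>s - t\<bar> powr \<beta>"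
    using assms(1) unfolding C1_Hol_def by blast
  let ?P = "{(s, t). s \<in> {0..1::real} \<and> t \<in> {0..1::real} \<and> s \<noteq> t}"
  let ?q = "\<lambda>p. norm (vderiv \<gamma> (fst p) - vderiv \<gamma> (snd p)) / \<bar>fst p - snd p\<bar> powr \<beta>"
  have "?q p \<le> H" if "p \<in> ?P" for p
    using that H by (auto simp: divide_le_eq)
  then have "bdd_above (?q ` ?P)"
    by (intro bdd_aboveI2) auto
  moreover have "(s, t) \<in> ?P"
    using assms False by simp
  ultimately have "?q (s, t) \<le> deriv_hol \<beta> \<gamma>"
    unfolding deriv_hol_def by (rule cSUP_upper2) simp
  then show ?thesis
    using False by (simp add: divide_le_eq)
qed simp

lemma deriv_hol_nonneg:
  assumes "C1_Hol \<beta> \<gamma>"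
  shows "0 \<le> deriv_hol \<beta> \<gamma>"
proof -
  have "norm (vderiv \<gamma> 0 - vderiv \<gamma> 1) \<le> deriv_hol \<beta> \<gamma>"
    using norm_vderiv_diff_le_deriv_hol[OF assms, of 0 1] by simp
  then show ?thesis
    by (meson norm_ge_zero order_trans)
qed

lemma C1_Hol_lipschitz:
  assumes "C1_Hol \<beta> \<gamma>" "0 \<le> \<beta>" "x \<in> {0..1}" "y \<in> {0..1}"
  shows "norm (\<gamma> x - \<gamma> y) \<le> deriv_sup \<gamma> * \<bar>x - y\<bar>"
proof -
  have "onorm (\<lambda>h. h *\<^sub>R vderiv \<gamma> t) = norm (vderiv \<gamma> t)" for t
    using onorm_scaleR_left[of "\<lambda>x::real. x" "vderiv \<gamma> t"] by (simp add: onorm_id bounded_linear_ident)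
  then have "norm (\<gamma> x - \<gamma> y) \<le> deriv_sup \<gamma> * norm (x - y)"
  proof (intro differentiable_bound[where f' = "\<lambda>t h. h *\<^sub>R vderiv \<gamma> t" and S = "{0..1}"])
    show "(\<gamma> has_derivative (\<lambda>h. h *\<^sub>R vderiv \<gamma> t)) (at t within {0..1})" if "t \<in> {0..1}" for t
      using C1_Hol_has_vector_derivative[OF assms(1) that] by (simp add: has_vector_derivative_def)
  qed (use assms norm_vderiv_le_deriv_sup[OF assms(1,2)] in auto)
  then show ?thesis
    by simp
qed

lemma C1_Hol_taylor:
  assumes "C1_Hol \<beta> \<gamma>" "0 \<le> \<beta>" "0 \<le> s" "s \<le> x" "x \<le> t" "t \<le> 1"
  shows "norm (\<gamma> x - \<gamma> s - (x - s) *\<^sub>R vderiv \<gamma> s) \<le> deriv_hol \<beta> \<gamma> * (t - s) powr (1 + \<beta>)"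
proof -
  let ?B = "deriv_hol \<beta> \<gamma> * (t - s) powr \<beta>"
  have sub: "{s..t} \<subseteq> {0..1}"
    using assms by auto
  have "norm (\<gamma> x - \<gamma> s - (x - s) *\<^sub>R vderiv \<gamma> s) \<le> norm (x - s) * ?B"
  proof (rule vector_differentiable_bound_linearization[where S = "{s..t}" and f' = "vderiv \<gamma>"])
    show "(\<gamma> has_vector_derivative vderiv \<gamma> y) (at y within {s..t})" if "y \<in> {s..t}" for y
      using C1_Hol_has_vector_derivative[OF assms(1)] sub that
      by (meson has_vector_derivative_within_subset subsetD)
    show "closed_segment s x \<subseteq> {s..t}"
      using assms by (simp add: closed_segment_eq_real_ivl)
    show "norm (vderiv \<gamma> y - vderiv \<gamma> s) \<le> ?B" if "y \<in> {s..t}" for y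
    proof -
      have "norm (vderiv \<gamma> y - vderiv \<gamma> s) \<le> deriv_hol \<beta> \<gamma> * \<bar>y - s\<bar> powr \<beta>"
        using sub that assms by (intro norm_vderiv_diff_le_deriv_hol) auto
      also have "\<dots> \<le> ?B"
        using that assms(2) deriv_hol_nonneg[OF assms(1)] by (intro mult_left_mono powr_mono2) auto
      finally show ?thesis .
    qed
  qed (use assms in auto)
  also have "\<dots> \<le> (t - s) * ?B"
    using assms deriv_hol_nonneg[OF assms(1)] by (intro mult_right_mono) auto
  also have "\<dots> = deriv_hol \<beta> \<gamma> * (t - s) powr (1 + \<beta>)"
    using assms by (simp add: powr_add)
  finally show ?thesis .
qed

lemma C1_Hol_abs_orient_le:
  assumes "C1_Hol \<beta> \<gamma>" "0 \<le> \<beta>" "0 \<le> s" "s \<le> u" "u \<le> t" "t \<le> 1"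
  shows "\<bar>orient (\<gamma> s) (\<gamma> u) (\<gamma> t)\<bar> \<le> 2 * deriv_sup \<gamma> * deriv_hol \<beta> \<gamma> * (t - s) powr (2 + \<beta>)"
proof -
  let ?v = "vderiv \<gamma> s" and ?h = "t - s"
  have "\<bar>orient (\<gamma> s) (\<gamma> u) (\<gamma> t)\<bar> \<le> 2 * deriv_sup \<gamma> * (deriv_hol \<beta> \<gamma> * ?h powr (1 + \<beta>)) * ?h"
  proof (rule abs_orient_le_tangent_errors)
    show "\<gamma> u - \<gamma> s = (u - s) *\<^sub>R ?v + (\<gamma> u - \<gamma> s - (u - s) *\<^sub>R ?v)"
      "\<gamma> t - \<gamma> s = ?h *\<^sub>R ?v + (\<gamma> t - \<gamma> s - ?h *\<^sub>R ?v)"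
      by simp_all
    show "norm (\<gamma> u - \<gamma> s - (u - s) *\<^sub>R ?v) \<le> deriv_hol \<beta> \<gamma> * ?h powr (1 + \<beta>)"
      "norm (\<gamma> t - \<gamma> s - ?h *\<^sub>R ?v) \<le> deriv_hol \<beta> \<gamma> * ?h powr (1 + \<beta>)"
      using assms by (intro C1_Hol_taylor; simp)+
    show "norm ?v \<le> deriv_sup \<gamma>"
      using assms by (intro norm_vderiv_le_deriv_sup) auto
    show "norm (\<gamma> t - \<gamma> s) \<le> deriv_sup \<gamma> * ?h"
      using C1_Hol_lipschitz[OF assms(1,2), of t s] assms by simp
  qed (use assms in simp)
  also have "\<dots> = 2 * deriv_sup \<gamma> * deriv_hol \<beta> \<gamma> * ?h powr (2 + \<beta>)"
  proof -
    have "?h powr (2 + \<beta>) = ?h powr (1 + \<beta>) * ?h powr 1"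
      by (subst powr_add[symmetric]) simp
    then show ?thesis
      using assms by simp
  qed
  finally show ?thesis .
qed

lemma C1_Hol_triangle_sides_le:
  assumes "C1_Hol \<beta> \<gamma>" "0 \<le> \<beta>" "tdiam_le \<gamma> (1/4)" "0 \<le> s" "s \<le> u" "u \<le> t" "t \<le> 1"
  shows "\<forall>x\<in>{\<gamma> s, \<gamma> u, \<gamma> t}. \<forall>y\<in>{\<gamma> s, \<gamma> u, \<gamma> t}. norm (x - y) \<le> min (deriv_sup \<gamma> * (t - s)) (1/2)"
proof -
  have "norm (\<gamma> a - \<gamma> b) \<le> min (deriv_sup \<gamma> * (t - s)) (1/2)" if "a \<in> {s, u, t}" "b \<in> {s, u, t}" for a b
  proof -
    have ab: "a \<in> {0..1}" "b \<in> {0..1}" "\<bar>a - b\<bar> \<le> t - s"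
      using that assms(4-7) by auto
    have "norm (\<gamma> a - \<gamma> b) \<le> deriv_sup \<gamma> * \<bar>a - b\<bar>"
      using C1_Hol_lipschitz[OF assms(1,2) ab(1,2)] .
    also have "\<dots> \<le> deriv_sup \<gamma> * (t - s)"
      using ab(3) deriv_sup_nonneg[OF assms(1,2)] by (rule mult_left_mono)
    finally show ?thesis
      using norm_diff_le_if_tdiam_le[OF C1_Hol_continuous_on[OF assms(1)] assms(3) _ ab(1,2)] by simp
  qed
  then show ?thesis
    by blast
qed

section \<open>Interpolation and summation over partitions\<close>

lemma min_le_powr_interpolation:
  fixes x y \<kappa> :: real
  assumes "0 \<le> x" "0 \<le> y" "0 \<le> \<kappa>" "\<kappa> \<le> 1"
  shows "min x y \<le> x powr \<kappa> * y powr (1 - \<kappa>)"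
proof -
  have *: "a \<le> a powr p * b powr (1 - p)" if ab: "0 \<le> a" "a \<le> b" "p \<le> 1" for a b p :: real
  proof (cases "a = 0")
    case False
    then have "a = a powr p * a powr (1 - p)"
      using ab by (subst powr_add[symmetric]) simp
    also have "\<dots> \<le> a powr p * b powr (1 - p)"
      using ab by (intro mult_left_mono powr_mono2) auto
    finally show ?thesis .
  qed simp
  show ?thesis
    using *[of x y \<kappa>] *[of y x "1 - \<kappa>"] assms by (cases "x \<le> y") (simp_all add: min_def mult.commute)
qed

lemma partitions01_step:
  assumes "ts \<in> partitions01" "i < length ts - 1"
  shows "0 \<le> ts ! i" "ts ! i < ts ! (i + 1)" "ts ! (i + 1) \<le> 1"
proof -
  have sorted: "sorted_wrt (<) ts" and ends: "ts ! 0 = 0" "ts ! (length ts - 1) = 1"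
    using assms(1) by (auto simp: partitions01_def hd_conv_nth last_conv_nth)
  have mono: "ts ! j \<le> ts ! k" if "j \<le> k" "k < length ts" for j k
    using sorted_wrt_nth_less[OF sorted, of j k] that by (cases "j = k") auto
  show "0 \<le> ts ! i"
    using mono[of 0 i] ends(1) assms(2) by simp
  show "ts ! (i + 1) \<le> 1"
    using mono[of "i + 1" "length ts - 1"] ends(2) assms(2) by simp
  show "ts ! i < ts ! (i + 1)"
    using sorted_wrt_nth_less[OF sorted] assms(2) by simp
qed

lemma pvar_le:
  assumes "\<And>s t. 0 \<le> s \<Longrightarrow> s < t \<Longrightarrow> t \<le> 1 \<Longrightarrow> loc_dist \<gamma> \<gamma>' s t powr \<alpha> \<le> c * (t - s)"
  shows "pvar \<alpha> \<gamma> \<gamma>' \<le> ereal c"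
  unfolding pvar_def
proof (rule SUP_least)
  fix ts assume ts: "ts \<in> partitions01"
  let ?n = "length ts - 1"
  have "(\<Sum>i<?n. loc_dist \<gamma> \<gamma>' (ts ! i) (ts ! (i + 1)) powr \<alpha>) \<le> (\<Sum>i<?n. c * (ts ! Suc i - ts ! i))"
    using assms partitions01_step[OF ts] by (intro sum_mono) simp
  also have "\<dots> = c * (ts ! ?n - ts ! 0)"
    by (simp add: sum_distrib_left[symmetric] sum_lessThan_telescope)
  also have "ts ! ?n - ts ! 0 = 1"
    using ts by (auto simp: partitions01_def hd_conv_nth last_conv_nth)
  finally show "ereal (\<Sum>i<?n. loc_dist \<gamma> \<gamma>' (ts ! i) (ts ! (i + 1)) powr \<alpha>) \<le> ereal c"
    by simp
qed

context
  fixes \<beta> :: real and \<gamma> \<gamma>' :: "real \<Rightarrow> real^2"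
  assumes \<beta>: "0 \<le> \<beta>" and C1: "C1_Hol \<beta> \<gamma>" "C1_Hol \<beta> \<gamma>'"
    and diam: "tdiam_le \<gamma> (1/4)" "tdiam_le \<gamma>' (1/4)"
begin

lemma tri_dist_le_taylor:
  assumes st: "0 \<le> s" "s \<le> u" "u \<le> t" "t \<le> 1"
  shows "tri_dist (\<gamma> s) (\<gamma> u) (\<gamma> t) (\<gamma>' s) (\<gamma>' u) (\<gamma>' t)
    \<le> 49 * ((deriv_sup \<gamma> + deriv_sup \<gamma>') * (deriv_hol \<beta> \<gamma> + deriv_hol \<beta> \<gamma>')) * (t - s) powr (2 + \<beta>)"
proof -
  let ?A1 = "deriv_sup \<gamma>" and ?A2 = "deriv_sup \<gamma>'" and ?H1 = "deriv_hol \<beta> \<gamma>" and ?H2 = "deriv_hol \<beta> \<gamma>'"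
  let ?q = "(t - s) powr (2 + \<beta>)"
  have cb: "\<gamma> u \<in> cball (\<gamma> s) 2" "\<gamma> t \<in> cball (\<gamma> s) 2" "\<gamma>' u \<in> cball (\<gamma>' s) 2" "\<gamma>' t \<in> cball (\<gamma>' s) 2"
    using mem_cball_if_sides_le[OF C1_Hol_triangle_sides_le[OF C1(1) \<beta> diam(1) st]]
      mem_cball_if_sides_le[OF C1_Hol_triangle_sides_le[OF C1(2) \<beta> diam(2) st]] by simp_all
  have "tri_dist (\<gamma> s) (\<gamma> u) (\<gamma> t) (\<gamma>' s) (\<gamma>' u) (\<gamma>' t)
      \<le> 49/2 * (\<bar>orient (\<gamma> s) (\<gamma> u) (\<gamma> t)\<bar> + \<bar>orient (\<gamma>' s) (\<gamma>' u) (\<gamma>' t)\<bar>)"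
    by (rule tri_dist_le_areas[OF cb])
  also have "\<dots> \<le> 49/2 * (2 * ?A1 * ?H1 * ?q + 2 * ?A2 * ?H2 * ?q)"
    using C1_Hol_abs_orient_le[OF C1(1) \<beta> st] C1_Hol_abs_orient_le[OF C1(2) \<beta> st] by simp
  also have "\<dots> = 49 * ((?A1 * ?H1 + ?A2 * ?H2) * ?q)"
    by (simp add: algebra_simps)
  also have "\<dots> \<le> 49 * ((?A1 + ?A2) * (?H1 + ?H2) * ?q)"
    using deriv_sup_nonneg[OF C1(1) \<beta>] deriv_sup_nonneg[OF C1(2) \<beta>]
      deriv_hol_nonneg[OF C1(1)] deriv_hol_nonneg[OF C1(2)]
    by (intro mult_left_mono mult_right_mono) (simp_all add: algebra_simps)
  finally show ?thesis
    by (simp add: mult.assoc)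
qed

lemma tri_dist_le_sup_dist:
  assumes st: "0 \<le> s" "s \<le> u" "u \<le> t" "t \<le> 1"
  shows "tri_dist (\<gamma> s) (\<gamma> u) (\<gamma> t) (\<gamma>' s) (\<gamma>' u) (\<gamma>' t)
    \<le> 1764 * (deriv_sup \<gamma> + deriv_sup \<gamma>') * (t - s) * tsup_dist \<gamma> \<gamma>'"
proof -
  let ?D = "tsup_dist \<gamma> \<gamma>'" and ?T = "tri_dist (\<gamma> s) (\<gamma> u) (\<gamma> t) (\<gamma>' s) (\<gamma>' u) (\<gamma>' t)"
  let ?L = "min (deriv_sup \<gamma> * (t - s)) (1/2)" and ?L' = "min (deriv_sup \<gamma>' * (t - s)) (1/2)"
  have sides: "\<forall>x\<in>{\<gamma> s, \<gamma> u, \<gamma> t}. \<forall>y\<in>{\<gamma> s, \<gamma> u, \<gamma> t}. norm (x - y) \<le> ?L"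
    "\<forall>x\<in>{\<gamma>' s, \<gamma>' u, \<gamma>' t}. \<forall>y\<in>{\<gamma>' s, \<gamma>' u, \<gamma>' t}. norm (x - y) \<le> ?L'"
    using C1_Hol_triangle_sides_le[OF C1(1) \<beta> diam(1) st] C1_Hol_triangle_sides_le[OF C1(2) \<beta> diam(2) st] .
  have D0: "0 \<le> ?D"
    by (rule tsup_dist_nonneg)
  have L0: "0 \<le> ?L" "0 \<le> ?L'"
    using bspec[OF bspec[OF sides(1)], of "\<gamma> s" "\<gamma> s"] bspec[OF bspec[OF sides(2)], of "\<gamma>' s" "\<gamma>' s"]
    by simp_all
  have "?T \<le> 882 * ((?L + ?L') * (2 * ?D))"
  proof (cases "?D < 1/4")
    case True
    obtain k where k: "\<forall>i. k$i \<in> \<int>" "\<And>x. x \<in> {0..1} \<Longrightarrow> norm (\<gamma>' x + k - \<gamma> x) \<le> 2 * ?D"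
      using common_lattice_shift[OF C1_Hol_continuous_on[OF C1(1)] C1_Hol_continuous_on[OF C1(2)]] True
      by auto
    have "?T \<le> 882 * (?L + ?L') * (2 * ?D)"
      using st True by (intro tri_dist_le_lattice_displacement[OF k(1) k(2) k(2) k(2) _ sides(1) _ sides(2)])
        simp_all
    then show ?thesis
      by (simp only: mult.assoc)
  next
    case False
    then have "?L * ?L \<le> ?L * (2 * ?D)" "?L' * ?L' \<le> ?L' * (2 * ?D)"
      using L0 by (intro mult_left_mono; simp)+
    then have sum: "?L * ?L + ?L' * ?L' \<le> (?L + ?L') * (2 * ?D)"
      unfolding distrib_right by (rule add_mono)
    have "?T \<le> 49/2 * (?L * ?L + ?L' * ?L')"
      by (rule tri_dist_le_sides[OF sides(1) _ sides(2)]) (simp_all add: min_le_iff_disj)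
    then have "?T \<le> 49/2 * ((?L + ?L') * (2 * ?D))"
      using sum by (rule order_trans[OF _ mult_left_mono]) simp
    also have "\<dots> \<le> 882 * ((?L + ?L') * (2 * ?D))"
      using L0 D0 by (intro mult_right_mono) simp_all
    finally show ?thesis .
  qed
  also have "\<dots> = 1764 * ((?L + ?L') * ?D)"
    by simp
  also have "\<dots> \<le> 1764 * ((deriv_sup \<gamma> + deriv_sup \<gamma>') * (t - s) * ?D)"
    using D0 by (intro mult_left_mono mult_right_mono) (simp_all add: algebra_simps add_mono)
  finally show ?thesis
    by (simp only: mult.assoc)
qed

lemma tri_dist_le_interpolated:
  assumes st: "0 \<le> s" "s \<le> u" "u \<le> t" "t \<le> 1" and \<kappa>: "0 \<le> \<kappa>" "\<kappa> \<le> 1"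
  shows "tri_dist (\<gamma> s) (\<gamma> u) (\<gamma> t) (\<gamma>' s) (\<gamma>' u) (\<gamma>' t)
    \<le> 1764 * ((deriv_sup \<gamma> + deriv_sup \<gamma>') * (deriv_hol \<beta> \<gamma> + deriv_hol \<beta> \<gamma>') powr \<kappa>
        * tsup_dist \<gamma> \<gamma>' powr (1 - \<kappa>)) * (t - s) powr (1 + (1 + \<beta>) * \<kappa>)"
proof -
  let ?T = "tri_dist (\<gamma> s) (\<gamma> u) (\<gamma> t) (\<gamma>' s) (\<gamma>' u) (\<gamma>' t)"
  let ?A = "deriv_sup \<gamma> + deriv_sup \<gamma>'" and ?H = "deriv_hol \<beta> \<gamma> + deriv_hol \<beta> \<gamma>'"
  let ?D = "tsup_dist \<gamma> \<gamma>'" and ?h = "t - s"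
  have A0: "0 \<le> ?A" and H0: "0 \<le> ?H" and D0: "0 \<le> ?D" and h0: "0 \<le> ?h"
    using deriv_sup_nonneg[OF C1(1) \<beta>] deriv_sup_nonneg[OF C1(2) \<beta>] deriv_hol_nonneg[OF C1(1)]
      deriv_hol_nonneg[OF C1(2)] tsup_dist_nonneg st by simp_all
  have "0 \<le> ?A * (?H * ?h powr (2 + \<beta>))"
    using A0 H0 by simp
  then have "?T \<le> 1764 * (?A * (?H * ?h powr (2 + \<beta>)))"
    using tri_dist_le_taylor[OF st, unfolded mult.assoc] by linarith
  moreover have "?T \<le> 1764 * (?A * (?h * ?D))"
    using tri_dist_le_sup_dist[OF st] by (simp only: mult.assoc)
  ultimately have "?T \<le> 1764 * (?A * min (?H * ?h powr (2 + \<beta>)) (?h * ?D))"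
    by (simp add: min_def)
  also have "\<dots> \<le> 1764 * (?A * ((?H * ?h powr (2 + \<beta>)) powr \<kappa> * (?h * ?D) powr (1 - \<kappa>)))"
    using A0 H0 D0 h0 \<kappa> by (intro mult_left_mono min_le_powr_interpolation) simp_all
  also have "(?H * ?h powr (2 + \<beta>)) powr \<kappa> * (?h * ?D) powr (1 - \<kappa>)
      = ?H powr \<kappa> * ?D powr (1 - \<kappa>) * ?h powr (1 + (1 + \<beta>) * \<kappa>)"
  proof -
    have "?h powr ((2 + \<beta>) * \<kappa>) * ?h powr (1 - \<kappa>) = ?h powr (1 + (1 + \<beta>) * \<kappa>)"
      by (simp add: powr_add[symmetric] algebra_simps)
    then show ?thesis
      using H0 D0 h0 by (simp add: powr_mult powr_powr ac_simps)
  qed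
  finally show ?thesis
    by (simp only: mult.assoc)
qed

lemma loc_dist_powr_le:
  assumes \<kappa>: "0 \<le> \<kappa>" "\<kappa> \<le> 1" and \<alpha>: "0 \<le> \<alpha>" "\<alpha> \<le> 2" "2 \<le> \<alpha> * (1 + (1 + \<beta>) * \<kappa>)"
    and st: "0 \<le> s" "s < t" "t \<le> 1"
  shows "loc_dist \<gamma> \<gamma>' s t powr \<alpha> \<le> 1764 * ((deriv_sup \<gamma> + deriv_sup \<gamma>')
      * (deriv_hol \<beta> \<gamma> + deriv_hol \<beta> \<gamma>') powr \<kappa> * tsup_dist \<gamma> \<gamma>' powr (1 - \<kappa>)) powr (\<alpha> / 2) * (t - s)"
proof -
  let ?M = "(deriv_sup \<gamma> + deriv_sup \<gamma>') * (deriv_hol \<beta> \<gamma> + deriv_hol \<beta> \<gamma>') powr \<kappa>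
    * tsup_dist \<gamma> \<gamma>' powr (1 - \<kappa>)"
  let ?e = "1 + (1 + \<beta>) * \<kappa>"
  let ?B = "1764 * ?M * (t - s) powr ?e"
  have M0: "0 \<le> ?M"
    using deriv_sup_nonneg[OF C1(1) \<beta>] deriv_sup_nonneg[OF C1(2) \<beta>] by simp
  have tri: "sqrt (tri_dist (\<gamma> s) (\<gamma> u) (\<gamma> t) (\<gamma>' s) (\<gamma>' u) (\<gamma>' t)) \<le> sqrt ?B" if "u \<in> {s..t}" for u
    using that st \<kappa> by (intro real_sqrt_le_mono tri_dist_le_interpolated) auto
  then have "loc_dist \<gamma> \<gamma>' s t \<le> sqrt ?B"
    unfolding loc_dist_def using st by (intro cSUP_least) auto
  moreover have "0 \<le> loc_dist \<gamma> \<gamma>' s t"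
    unfolding loc_dist_def using st tri
    by (intro cSUP_upper2[where x = s] bdd_aboveI2[where M = "sqrt ?B"]) (auto simp: tri_dist_nonneg)
  ultimately have "loc_dist \<gamma> \<gamma>' s t powr \<alpha> \<le> sqrt ?B powr \<alpha>"
    using \<alpha> by (intro powr_mono2) auto
  also have "\<dots> = 1764 powr (\<alpha> / 2) * ?M powr (\<alpha> / 2) * ((t - s) powr ?e) powr (\<alpha> / 2)"
    using M0 by (simp add: powr_half_sqrt[symmetric] powr_powr powr_mult)
  also have "\<dots> \<le> 1764 * ?M powr (\<alpha> / 2) * (t - s)"
  proof -
    have "(1764::real) powr (\<alpha> / 2) \<le> 1764 powr 1"
      using \<alpha> by (intro powr_mono) auto
    moreover have "((t - s) powr ?e) powr (\<alpha> / 2) \<le> (t - s) powr 1"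
      unfolding powr_powr using \<alpha>(3) st by (intro powr_mono') (auto simp: field_simps)
    ultimately show ?thesis
      using st by (intro mult_mono mult_right_mono) auto
  qed
  finally show ?thesis .
qed

end

lemma exponents_admissible:
  fixes \<alpha> \<beta> \<kappa> :: real
  assumes "0 < \<alpha>" "\<alpha> \<le> 1" "2/\<alpha> - 2 \<le> \<beta>" "(2 - \<alpha>) / (\<alpha> * (1 + \<beta>)) \<le> \<kappa>"
  shows "0 \<le> \<beta>" "0 \<le> \<kappa>" "2 \<le> \<alpha> * (1 + (1 + \<beta>) * \<kappa>)"
proof -
  have "2 \<le> 2 / \<alpha>"
    using assms(1,2) by (simp add: le_divide_eq)
  then show \<beta>: "0 \<le> \<beta>"
    using assms(3) by linarith
  then have pos: "0 < \<alpha> * (1 + \<beta>)"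
    using assms(1) by simp
  then show "0 \<le> \<kappa>"
    using assms(2,4) by (smt (verit) divide_nonneg_pos)
  have "2 - \<alpha> \<le> \<kappa> * (\<alpha> * (1 + \<beta>))"
    using assms(4) pos by (simp add: divide_le_eq)
  then show "2 \<le> \<alpha> * (1 + (1 + \<beta>) * \<kappa>)"
    by (simp add: algebra_simps)
qed

theorem proposition3p20:
  shows "\<exists>C>0. \<forall>(\<alpha>::real) (\<beta>::real) (\<kappa>::real) (\<gamma>::real \<Rightarrow> real^2) (\<gamma>'::real \<Rightarrow> real^2).
     \<alpha> \<in> {2/3..1} \<and> \<beta> \<in> {2/\<alpha> - 2..1} \<and> \<kappa> \<in> {(2-\<alpha>)/(\<alpha>*(1+\<beta>))..1} \<and>
     C1_Hol \<beta> \<gamma> \<and> C1_Hol \<beta> \<gamma>' \<and> tdiam_le \<gamma> (1/4) \<and> tdiam_le \<gamma>' (1/4) \<longrightarrow>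
     pvar \<alpha> \<gamma> \<gamma>' \<le> ereal (C * ((deriv_sup \<gamma> + deriv_sup \<gamma>')
        * (deriv_hol \<beta> \<gamma> + deriv_hol \<beta> \<gamma>') powr \<kappa>
        * tsup_dist \<gamma> \<gamma>' powr (1 - \<kappa>)) powr (\<alpha>/2))"
proof (intro exI[of _ 1764] conjI allI impI)
  fix \<alpha> \<beta> \<kappa> :: real and \<gamma> \<gamma>' :: "real \<Rightarrow> real^2"
  assume "\<alpha> \<in> {2/3..1} \<and> \<beta> \<in> {2/\<alpha> - 2..1} \<and> \<kappa> \<in> {(2-\<alpha>)/(\<alpha>*(1+\<beta>))..1} \<and>
     C1_Hol \<beta> \<gamma> \<and> C1_Hol \<beta> \<gamma>' \<and> tdiam_le \<gamma> (1/4) \<and> tdiam_le \<gamma>' (1/4)"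
  then have \<alpha>: "0 < \<alpha>" "\<alpha> \<le> 1" and \<kappa>: "\<kappa> \<le> 1"
    and exps: "0 \<le> \<beta>" "0 \<le> \<kappa>" "2 \<le> \<alpha> * (1 + (1 + \<beta>) * \<kappa>)"
    and paths: "C1_Hol \<beta> \<gamma>" "C1_Hol \<beta> \<gamma>'" "tdiam_le \<gamma> (1/4)" "tdiam_le \<gamma>' (1/4)"
    using exponents_admissible[of \<alpha> \<beta> \<kappa>] by auto
  show "pvar \<alpha> \<gamma> \<gamma>' \<le> ereal (1764 * ((deriv_sup \<gamma> + deriv_sup \<gamma>')
        * (deriv_hol \<beta> \<gamma> + deriv_hol \<beta> \<gamma>') powr \<kappa> * tsup_dist \<gamma> \<gamma>' powr (1 - \<kappa>)) powr (\<alpha>/2))"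
    using \<alpha> \<kappa> exps by (intro pvar_le loc_dist_powr_le[OF exps(1) paths]) auto
qed simp

end
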